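(* Let $\mathcal{M}=\mathcal{M}_1\times\cdots\times\mathcal{M}_n$ with each $\mathcal{M}_i\subset\mathbb{R}^{m_i}$ nonempty compact convex, and let $f:\mathbb{R}^m\to\mathbb{R}$ be differentiable. Suppose there is a positive semidefinite matrix $H$, partitioned into blocks $H_{ij}$ conformally with the blocks of $x$, such that $f(y)\le f(x)+\langle y-x,\nabla f(x)\rangle+\frac12(y-x)^TH(y-x)$ for all $x,y\in\mathcal{M}$. Define $B_i=\sup_{x_i\in\mathcal{M}_i}x_i^TH_{ii}x_i$, $\mu_{ij}=\sup_{x_i\in\mathcal{M}_i,x_j\in\mathcal{M}_j}x_i^TH_{ij}x_j$, $B=\frac1n\sum_{i=1}^nB_i$, and $\mu=\frac{1}{n(n-1)}\sum_{i\ne j}\mu_{ij}$. Then for every $\tau=1,\dots,n$, $$C_f^{\tau}\le 4\big(\tau B+\tau(\tau-1)\mu\big).$$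
   Context: Notation: $x=(x_{(1)},\dots,x_{(n)})$; for $S\subseteq[n]$, $x_{(S)}$ is the subvector of blocks in $S$, $\mathcal{M}^{(S)}=\prod_{i\in S}\mathcal{M}_i$, $\nabla_{(S)}f$ the partial gradient, $s_{[S]}\in\mathbb{R}^m$ is $s_{(S)}$ padded with zeros outside $S$. Set curvature: $C_f^{(S)}=\sup\frac{2}{\gamma^2}\big(f(y)-f(x)-\langle y_{(S)}-x_{(S)},\nabla_{(S)}f(x)\rangle\big)$ over $x\in\mathcal{M}$, $s_{(S)}\in\mathcal{M}^{(S)}$, $\gamma\in(0,1]$, $y=x+\gamma(s_{[S]}-x_{[S]})$. Expected set curvature: $C_f^\tau=\binom{n}{\tau}^{-1}\sum_{S\subseteq[n],|S|=\tau}C_f^{(S)}$. *)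

theory Defs
  imports "HOL-Analysis.Analysis"
begin

text \<open>The ambient space R^m is real^'m; coordinate j belongs to block blk j.
  A block vector x_(i) is represented by its zero-padding x_[{i}] in real^'m.\<close>

definition restr :: "('m \<Rightarrow> nat) \<Rightarrow> nat set \<Rightarrow> real^'m \<Rightarrow> real^'m" where
  "restr blk S x = (\<chi> j. if blk j \<in> S then x $ j else 0)"

text \<open>M = M_1 x ... x M_n, where Mb i (a set of vectors supported on block i) plays M_i.\<close>
definition prodset :: "('m \<Rightarrow> nat) \<Rightarrow> nat \<Rightarrow> (nat \<Rightarrow> (real^'m) set) \<Rightarrow> (real^'m) set" where
  "prodset blk n Mb = {x. \<forall>i<n. restr blk {i} x \<in> Mb i}"

definition set_curv ::
  "(real^'m \<Rightarrow> real) \<Rightarrow> (real^'m \<Rightarrow> real^'m) \<Rightarrow> ('m \<Rightarrow> nat) \<Rightarrow> nat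
   \<Rightarrow> (nat \<Rightarrow> (real^'m) set) \<Rightarrow> nat set \<Rightarrow> real" where
  "set_curv f df blk n Mb S = Sup {2 / \<gamma>^2 * (f y - f x - restr blk S (y - x) \<bullet> restr blk S (df x)) | x s \<gamma> y.
      x \<in> prodset blk n Mb \<and> (\<forall>i\<in>S. restr blk {i} s \<in> Mb i) \<and> 0 < \<gamma> \<and> \<gamma> \<le> 1 \<and>
      y = x + \<gamma> *\<^sub>R (restr blk S s - restr blk S x)}"

definition exp_curv ::
  "(real^'m \<Rightarrow> real) \<Rightarrow> (real^'m \<Rightarrow> real^'m) \<Rightarrow> ('m \<Rightarrow> nat) \<Rightarrow> nat
   \<Rightarrow> (nat \<Rightarrow> (real^'m) set) \<Rightarrow> nat \<Rightarrow> real" where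
  "exp_curv f df blk n Mb \<tau> =
     (\<Sum>S | S \<subseteq> {..<n} \<and> card S = \<tau>. set_curv f df blk n Mb S) / real (n choose \<tau>)"

end

theory Submission
  imports Defs
begin

text \<open>For a set S of blocks, the step y = x + \<gamma>(s[S] - x[S]) stays in M by convexity, so the
  quadratic upper model bounds the curvature quotient by d' H d with d = s[S] - x[S]. Positive
  semidefiniteness gives d' H d \<le> 2 s' H s + 2 x' H x, and expanding these quadratic forms
  blockwise bounds each of them by the sum of the B i over i \<in> S plus the sum of the \<mu> i j
  over ordered pairs i \<noteq> j in S. Averaging over all \<tau>-subsets, every block lies in
  C(n-1, \<tau>-1) and every ordered pair in C(n-2, \<tau>-2) of them, which produces the factors
  \<tau>/n and \<tau>(\<tau>-1)/(n(n-1)).\<close>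

lemma restr_restr [simp]: "restr blk S (restr blk T v) = restr blk (S \<inter> T) v"
  unfolding restr_def by (simp add: vec_eq_iff)

lemma restr_empty [simp]: "restr blk {} v = 0"
  unfolding restr_def by (simp add: vec_eq_iff)

lemma restr_add: "restr blk S (u + v) = restr blk S u + restr blk S v"
  unfolding restr_def by (simp add: vec_eq_iff)

lemma restr_diff: "restr blk S (u - v) = restr blk S u - restr blk S v"
  unfolding restr_def by (simp add: vec_eq_iff)

lemma restr_scaleR: "restr blk S (c *\<^sub>R u) = c *\<^sub>R restr blk S u"
  unfolding restr_def by (simp add: vec_eq_iff)

lemma restr_sum_singletons: "finite S \<Longrightarrow> restr blk S v = (\<Sum>i\<in>S. restr blk {i} v)"
  unfolding restr_def by (simp add: vec_eq_iff sum.delta)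

lemma inner_restr_left: "restr blk S u \<bullet> v = restr blk S u \<bullet> restr blk S v"
  unfolding restr_def inner_vec_def by (rule sum.cong) auto

lemma bilinear_form_sum:
  fixes H :: "real^'m^'m"
  shows "(\<Sum>i\<in>S. a i) \<bullet> (H *v (\<Sum>j\<in>T. b j)) = (\<Sum>i\<in>S. \<Sum>j\<in>T. a i \<bullet> (H *v b j))"
proof -
  have "H *v (\<Sum>j\<in>T. b j) = (\<Sum>j\<in>T. H *v b j)"
    using linear_sum[OF matrix_vector_mul_linear[of H]] by simp
  then show ?thesis by (simp add: inner_sum_left inner_sum_right sum.swap[of _ T])
qed

lemma quad_form_diff_le:
  fixes H :: "real^'m^'m"
  assumes psd: "\<And>v. 0 \<le> v \<bullet> (H *v v)"
  shows "(a - b) \<bullet> (H *v (a - b)) \<le> 2 * (a \<bullet> (H *v a)) + 2 * (b \<bullet> (H *v b))"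
proof -
  have "0 \<le> (a + b) \<bullet> (H *v (a + b))" by (rule psd)
  then show ?thesis
    by (simp add: matrix_vector_right_distrib matrix_vector_mult_diff_distrib
        inner_add_left inner_add_right inner_diff_left inner_diff_right)
qed

lemma sum_sum_diagonal_split:
  assumes "finite S"
  shows "(\<Sum>i\<in>S. \<Sum>j\<in>S. g i j)
    = (\<Sum>i\<in>S. g i i) + (\<Sum>(i,j)\<in>{(i,j). i \<in> S \<and> j \<in> S \<and> i \<noteq> j}. g i j)"
proof -
  have "(\<Sum>i\<in>S. \<Sum>j\<in>S. g i j) = (\<Sum>(i,j)\<in>S \<times> S. g i j)"
    by (simp add: sum.cartesian_product)
  also have "S \<times> S = (\<lambda>i. (i,i)) ` S \<union> {(i,j). i \<in> S \<and> j \<in> S \<and> i \<noteq> j}" by auto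
  also have "(\<Sum>(i,j)\<in>\<dots>. g i j)
     = (\<Sum>(i,j)\<in>(\<lambda>i. (i,i)) ` S. g i j) + (\<Sum>(i,j)\<in>{(i,j). i \<in> S \<and> j \<in> S \<and> i \<noteq> j}. g i j)"
    by (rule sum.union_disjoint) (use assms in \<open>auto intro: finite_subset[of _ "S \<times> S"]\<close>)
  also have "(\<Sum>(i,j)\<in>(\<lambda>i. (i,i)) ` S. g i j) = (\<Sum>i\<in>S. g i i)"
    by (subst sum.reindex) (auto simp: inj_on_def)
  finally show ?thesis .
qed

lemma quad_form_restr_le:
  fixes H :: "real^'m^'m"
  assumes "finite S"
    and diag: "\<And>i. i \<in> S \<Longrightarrow> restr blk {i} w \<bullet> (H *v restr blk {i} w) \<le> b i"
    and offdiag: "\<And>i j. i \<in> S \<Longrightarrow> j \<in> S \<Longrightarrow> i \<noteq> j \<Longrightarrow>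
        restr blk {i} w \<bullet> (H *v restr blk {j} w) \<le> m i j"
  shows "restr blk S w \<bullet> (H *v restr blk S w)
    \<le> (\<Sum>i\<in>S. b i) + (\<Sum>(i,j)\<in>{(i,j). i \<in> S \<and> j \<in> S \<and> i \<noteq> j}. m i j)"
proof -
  have "restr blk S w \<bullet> (H *v restr blk S w)
      = (\<Sum>i\<in>S. restr blk {i} w \<bullet> (H *v restr blk {i} w))
        + (\<Sum>(i,j)\<in>{(i,j). i \<in> S \<and> j \<in> S \<and> i \<noteq> j}. restr blk {i} w \<bullet> (H *v restr blk {j} w))"
    unfolding restr_sum_singletons[OF \<open>finite S\<close>, of blk w] bilinear_form_sum
    by (rule sum_sum_diagonal_split[OF \<open>finite S\<close>])
  also have "\<dots> \<le> (\<Sum>i\<in>S. b i) + (\<Sum>(i,j)\<in>{(i,j). i \<in> S \<and> j \<in> S \<and> i \<noteq> j}. m i j)"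
    by (intro add_mono sum_mono) (auto intro: diag offdiag)
  finally show ?thesis .
qed

lemma card_subsets_containing:
  assumes "finite A" "T \<subseteq> A" "card T \<le> k"
  shows "card {S. S \<subseteq> A \<and> card S = k \<and> T \<subseteq> S} = (card A - card T) choose (k - card T)"
proof -
  have "finite T" using assms finite_subset by blast
  have "bij_betw (\<lambda>U. U \<union> T) {U. U \<subseteq> A - T \<and> card U = k - card T}
      {S. S \<subseteq> A \<and> card S = k \<and> T \<subseteq> S}"
  proof (rule bij_betw_byWitness[where f'="\<lambda>S. S - T"])
    show "(\<lambda>S. S - T) ` {S. S \<subseteq> A \<and> card S = k \<and> T \<subseteq> S} \<subseteq> {U. U \<subseteq> A - T \<and> card U = k - card T}"
    proof clarify
      fix S assume "S \<subseteq> A" "T \<subseteq> S" "k = card S"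
      then show "S - T \<subseteq> A - T \<and> card (S - T) = card S - card T"
        using \<open>finite T\<close> by (auto simp: card_Diff_subset)
    qed
    show "(\<lambda>U. U \<union> T) ` {U. U \<subseteq> A - T \<and> card U = k - card T} \<subseteq> {S. S \<subseteq> A \<and> card S = k \<and> T \<subseteq> S}"
    proof (rule image_subsetI)
      fix U assume "U \<in> {U. U \<subseteq> A - T \<and> card U = k - card T}"
      then have U: "U \<subseteq> A - T" "card U = k - card T" by auto
      then have "card (U \<union> T) = card U + card T"
        using assms \<open>finite T\<close> by (intro card_Un_disjoint) (auto intro: finite_subset[of U A])
      then show "U \<union> T \<in> {S. S \<subseteq> A \<and> card S = k \<and> T \<subseteq> S}" using U assms by auto
    qed
  qed auto
  from bij_betw_same_card[OF this]
  have "card {S. S \<subseteq> A \<and> card S = k \<and> T \<subseteq> S} = card {U. U \<subseteq> A - T \<and> card U = k - card T}"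
    by (rule sym)
  also have "\<dots> = (card A - card T) choose (k - card T)"
    using assms \<open>finite T\<close> by (simp add: n_subsets card_Diff_subset)
  finally show ?thesis .
qed

lemma sum_double_counting:
  assumes "finite F" "finite P"
    and "\<And>S. S \<in> F \<Longrightarrow> Q S \<subseteq> P"
    and "\<And>p. p \<in> P \<Longrightarrow> card {S \<in> F. p \<in> Q S} = c"
  shows "(\<Sum>S\<in>F. \<Sum>p\<in>Q S. g p) = of_nat c * (\<Sum>p\<in>P. g p)"
proof -
  have "(\<Sum>S\<in>F. \<Sum>p\<in>Q S. g p) = (\<Sum>S\<in>F. \<Sum>p\<in>{p \<in> P. p \<in> Q S}. g p)"
    using assms(3) by (intro sum.cong refl) blast
  also have "\<dots> = (\<Sum>p\<in>P. \<Sum>S\<in>{S \<in> F. p \<in> Q S}. g p)"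
    by (rule sum.swap_restrict[OF assms(1,2)])
  also have "\<dots> = of_nat c * (\<Sum>p\<in>P. g p)"
    using assms(4) by (simp add: sum_distrib_left)
  finally show ?thesis .
qed

lemma sum_subsets_sum:
  assumes "1 \<le> \<tau>"
  shows "(\<Sum>S | S \<subseteq> {..<n} \<and> card S = \<tau>. \<Sum>i\<in>S. b i)
    = of_nat ((n - 1) choose (\<tau> - 1)) * (\<Sum>i<n. b i)"
proof (rule sum_double_counting[where Q="\<lambda>S. S"])
  show "finite {S. S \<subseteq> {..<n} \<and> card S = \<tau>}"
    by (rule finite_subset[of _ "Pow {..<n}"]) auto
  fix i :: nat assume "i \<in> {..<n}"
  then have "{S \<in> {S. S \<subseteq> {..<n} \<and> card S = \<tau>}. i \<in> S}
      = {S. S \<subseteq> {..<n} \<and> card S = \<tau> \<and> {i} \<subseteq> S}" by auto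
  then show "card {S \<in> {S. S \<subseteq> {..<n} \<and> card S = \<tau>}. i \<in> S} = (n - 1) choose (\<tau> - 1)"
    using card_subsets_containing[of "{..<n}" "{i}" \<tau>] \<open>i \<in> {..<n}\<close> assms by simp
qed auto

lemma sum_subsets_pairs:
  assumes "2 \<le> \<tau>"
  shows "(\<Sum>S | S \<subseteq> {..<n} \<and> card S = \<tau>. \<Sum>(i,j)\<in>{(i,j). i \<in> S \<and> j \<in> S \<and> i \<noteq> j}. m i j)
    = of_nat ((n - 2) choose (\<tau> - 2)) * (\<Sum>(i,j)\<in>{(i,j). i < n \<and> j < n \<and> i \<noteq> j}. m i j)"
proof (rule sum_double_counting[where Q="\<lambda>S. {(i,j). i \<in> S \<and> j \<in> S \<and> i \<noteq> j}"])
  show "finite {S. S \<subseteq> {..<n} \<and> card S = \<tau>}"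
    by (rule finite_subset[of _ "Pow {..<n}"]) auto
  show "finite {(i,j). i < n \<and> j < n \<and> i \<noteq> j}"
    by (rule finite_subset[of _ "{..<n} \<times> {..<n}"]) auto
  fix p assume "p \<in> {(i,j). i < n \<and> j < n \<and> i \<noteq> j}"
  then obtain a b where p: "p = (a,b)" "a < n" "b < n" "a \<noteq> b" by auto
  then have "{S \<in> {S. S \<subseteq> {..<n} \<and> card S = \<tau>}. p \<in> {(i,j). i \<in> S \<and> j \<in> S \<and> i \<noteq> j}}
      = {S. S \<subseteq> {..<n} \<and> card S = \<tau> \<and> {a,b} \<subseteq> S}" by auto
  then show "card {S \<in> {S. S \<subseteq> {..<n} \<and> card S = \<tau>}. p \<in> {(i,j). i \<in> S \<and> j \<in> S \<and> i \<noteq> j}}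
      = (n - 2) choose (\<tau> - 2)"
    using card_subsets_containing[of "{..<n}" "{a,b}" \<tau>] p assms by (simp add: numeral_2_eq_2)
qed auto

lemma average_over_subsets:
  fixes b :: "nat \<Rightarrow> real" and m :: "nat \<Rightarrow> nat \<Rightarrow> real"
  assumes "1 \<le> \<tau>" "\<tau> \<le> n"
  shows "(\<Sum>S | S \<subseteq> {..<n} \<and> card S = \<tau>.
            (\<Sum>i\<in>S. b i) + (\<Sum>(i,j)\<in>{(i,j). i \<in> S \<and> j \<in> S \<and> i \<noteq> j}. m i j)) / real (n choose \<tau>)
    = real \<tau> * ((1 / real n) * (\<Sum>i<n. b i))
      + real \<tau> * (real \<tau> - 1) * ((1 / (real n * (real n - 1))) * (\<Sum>(i,j)\<in>{(i,j). i < n \<and> j < n \<and> i \<noteq> j}. m i j))"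
    (is "(\<Sum>S\<in>?F. ?B S + ?M S) / _ = ?RB + ?RM")
proof -
  define C where "C = real (n choose \<tau>)"
  define c1 where "c1 = real ((n - 1) choose (\<tau> - 1))"
  have "C \<noteq> 0" "real n \<noteq> 0" unfolding C_def using assms by auto
  have "\<tau> * (n choose \<tau>) = n * ((n - 1) choose (\<tau> - 1))"
    using binomial_absorption[of "\<tau> - 1" n] assms by simp
  then have "real \<tau> * C = real n * c1"
    unfolding C_def c1_def by (metis of_nat_mult)
  then have c1: "c1 = real \<tau> * C / real n"
    using \<open>real n \<noteq> 0\<close> by (simp add: field_simps)
  have singles: "(\<Sum>S\<in>?F. ?B S) / C = ?RB"
    unfolding sum_subsets_sum[OF assms(1)] c1_def[symmetric] c1 using \<open>C \<noteq> 0\<close> by simp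
  have pairs: "(\<Sum>S\<in>?F. ?M S) / C = ?RM"
  proof (cases "\<tau> = 1")
    case True
    have "?M S = 0" if "S \<in> ?F" for S
    proof -
      from that True have "card S = 1" by simp
      then obtain a where "S = {a}" by (rule card_1_singletonE)
      then have "{(i,j). i \<in> S \<and> j \<in> S \<and> i \<noteq> j} = {}" by auto
      then show ?thesis by (simp only: sum.empty)
    qed
    then show ?thesis using True by simp
  next
    case False
    then have "2 \<le> \<tau>" using assms by simp
    then have "real n * (real n - 1) \<noteq> 0" using assms by simp
    define c2 where "c2 = real ((n - 2) choose (\<tau> - 2))"
    have "Suc (\<tau> - 2) = \<tau> - 1" "n - 1 - 1 = n - 2" using \<open>2 \<le> \<tau>\<close> by auto
    then have "(\<tau> - 1) * ((n - 1) choose (\<tau> - 1)) = (n - 1) * ((n - 2) choose (\<tau> - 2))"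
      using binomial_absorption[of "\<tau> - 2" "n - 1"] by simp
    then have "real ((\<tau> - 1) * ((n - 1) choose (\<tau> - 1))) = real ((n - 1) * ((n - 2) choose (\<tau> - 2)))"
      by (rule arg_cong)
    then have "(real \<tau> - 1) * c1 = (real n - 1) * c2"
      using assms \<open>2 \<le> \<tau>\<close> unfolding c1_def c2_def by (simp add: of_nat_diff)
    then have c2: "c2 = real \<tau> * (real \<tau> - 1) * C / (real n * (real n - 1))"
      using \<open>real n * (real n - 1) \<noteq> 0\<close> unfolding c1 by (simp add: field_simps)
    show ?thesis
      unfolding sum_subsets_pairs[OF \<open>2 \<le> \<tau>\<close>] c2_def[symmetric] c2 using \<open>C \<noteq> 0\<close> by simp
  qed
  show ?thesis
    unfolding sum.distrib add_divide_distrib C_def[symmetric] singles pairs ..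
qed

lemma prodset_nonempty:
  assumes "\<And>i. i < n \<Longrightarrow> Mb i \<subseteq> {v. \<forall>j. blk j \<noteq> i \<longrightarrow> v $ j = 0}"
    and "\<And>i. i < n \<Longrightarrow> Mb i \<noteq> {}"
  shows "prodset blk n Mb \<noteq> {}"
proof -
  define e where "e i = (SOME v. v \<in> Mb i)" for i
  have e: "e i \<in> Mb i" if "i < n" for i
    unfolding e_def using assms(2)[OF that] by (simp add: some_in_eq)
  have "restr blk {i} (\<chi> j. e (blk j) $ j) = e i" if "i < n" for i
    using assms(1)[OF that] e[OF that] by (auto simp: restr_def vec_eq_iff)
  then have "(\<chi> j. e (blk j) $ j) \<in> prodset blk n Mb"
    unfolding prodset_def using e by simp
  then show ?thesis by blast
qed

lemma prodset_block_step:
  assumes x: "x \<in> prodset blk n Mb" and s: "\<forall>i\<in>S. restr blk {i} s \<in> Mb i"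
    and convex: "\<And>i. i \<in> S \<Longrightarrow> convex (Mb i)" and "0 \<le> \<gamma>" "\<gamma> \<le> 1"
  shows "x + \<gamma> *\<^sub>R (restr blk S s - restr blk S x) \<in> prodset blk n Mb"
  unfolding prodset_def
proof (intro CollectI allI impI)
  fix i assume "i < n"
  then have xi: "restr blk {i} x \<in> Mb i" using x unfolding prodset_def by auto
  have step: "restr blk {i} (x + \<gamma> *\<^sub>R (restr blk S s - restr blk S x))
      = restr blk {i} x + \<gamma> *\<^sub>R (restr blk ({i} \<inter> S) s - restr blk ({i} \<inter> S) x)"
    by (simp add: restr_add restr_scaleR restr_diff)
  show "restr blk {i} (x + \<gamma> *\<^sub>R (restr blk S s - restr blk S x)) \<in> Mb i"
  proof (cases "i \<in> S")
    case True
    then have "restr blk {i} (x + \<gamma> *\<^sub>R (restr blk S s - restr blk S x))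
        = (1 - \<gamma>) *\<^sub>R restr blk {i} x + \<gamma> *\<^sub>R restr blk {i} s"
      unfolding step by (simp add: algebra_simps)
    then show ?thesis
      using convexD[OF convex[OF True] xi, of "restr blk {i} s" "1 - \<gamma>" \<gamma>] s True assms by auto
  next
    case False
    then show ?thesis using xi unfolding step by simp
  qed
qed

lemma curvature_quotient_le:
  fixes H :: "real^'m^'m"
  assumes "S \<subseteq> {..<n}"
    and convex: "\<And>i. i \<in> S \<Longrightarrow> convex (Mb i)"
    and psd: "\<And>v. 0 \<le> v \<bullet> (H *v v)"
    and quad: "\<And>x y. x \<in> prodset blk n Mb \<Longrightarrow> y \<in> prodset blk n Mb \<Longrightarrow>
        f y \<le> f x + (y - x) \<bullet> df x + 1/2 * ((y - x) \<bullet> (H *v (y - x)))"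
    and bound: "\<And>w. \<forall>i\<in>S. restr blk {i} w \<in> Mb i \<Longrightarrow> restr blk S w \<bullet> (H *v restr blk S w) \<le> K"
    and x: "x \<in> prodset blk n Mb" and s: "\<forall>i\<in>S. restr blk {i} s \<in> Mb i"
    and "0 < \<gamma>" "\<gamma> \<le> 1" and y: "y = x + \<gamma> *\<^sub>R (restr blk S s - restr blk S x)"
  shows "2 / \<gamma>^2 * (f y - f x - restr blk S (y - x) \<bullet> restr blk S (df x)) \<le> 4 * K"
proof -
  define d where "d = restr blk S s - restr blk S x"
  have yx: "y - x = \<gamma> *\<^sub>R d" using y d_def by simp
  have "restr blk S d = d" unfolding d_def restr_diff by simp
  then have restr_df: "restr blk S (y - x) \<bullet> restr blk S (df x) = (y - x) \<bullet> df x"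
    using inner_restr_left[of blk S d "df x"] unfolding yx restr_scaleR by simp
  have "y \<in> prodset blk n Mb"
    unfolding y using \<open>0 < \<gamma>\<close> \<open>\<gamma> \<le> 1\<close> by (intro prodset_block_step[OF x s convex]) auto
  then have "f y \<le> f x + (y - x) \<bullet> df x + 1/2 * ((y - x) \<bullet> (H *v (y - x)))"
    by (rule quad[OF x])
  then have taylor: "f y - f x - (y - x) \<bullet> df x \<le> \<gamma>^2 / 2 * (d \<bullet> (H *v d))"
    unfolding yx by (simp add: matrix_vector_mult_scaleR power2_eq_square)
  have "\<forall>i\<in>S. restr blk {i} x \<in> Mb i" using x \<open>S \<subseteq> {..<n}\<close> unfolding prodset_def by auto
  then have "d \<bullet> (H *v d) \<le> 4 * K"
    using quad_form_diff_le[OF psd, of "restr blk S s" "restr blk S x"] bound[OF s] bound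
    unfolding d_def by fastforce
  have "2 / \<gamma>^2 * (f y - f x - restr blk S (y - x) \<bullet> restr blk S (df x))
      = 2 / \<gamma>^2 * (f y - f x - (y - x) \<bullet> df x)" by (simp only: restr_df)
  also have "\<dots> \<le> 2 / \<gamma>^2 * (\<gamma>^2 / 2 * (d \<bullet> (H *v d)))"
    by (rule mult_left_mono[OF taylor]) simp
  also have "\<dots> = d \<bullet> (H *v d)" using \<open>0 < \<gamma>\<close> by simp
  also have "\<dots> \<le> 4 * K" by fact
  finally show ?thesis .
qed

lemma set_curv_le:
  fixes H :: "real^'m^'m"
  assumes "S \<subseteq> {..<n}"
    and "\<And>i. i \<in> S \<Longrightarrow> convex (Mb i)"
    and "prodset blk n Mb \<noteq> {}"
    and "\<And>v. 0 \<le> v \<bullet> (H *v v)"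
    and "\<And>x y. x \<in> prodset blk n Mb \<Longrightarrow> y \<in> prodset blk n Mb \<Longrightarrow>
        f y \<le> f x + (y - x) \<bullet> df x + 1/2 * ((y - x) \<bullet> (H *v (y - x)))"
    and "\<And>w. \<forall>i\<in>S. restr blk {i} w \<in> Mb i \<Longrightarrow> restr blk S w \<bullet> (H *v restr blk S w) \<le> K"
  shows "set_curv f df blk n Mb S \<le> 4 * K"
  unfolding set_curv_def
proof (rule cSup_least, goal_cases)
  case 1
  obtain x where x: "x \<in> prodset blk n Mb" using assms(3) by blast
  then have "\<forall>i\<in>S. restr blk {i} x \<in> Mb i" using \<open>S \<subseteq> {..<n}\<close> unfolding prodset_def by auto
  with x show ?case
    by (simp only: Collect_empty_eq not_all not_not)
      (rule exI, intro exI[of _ x] exI[of _ "1::real"] conjI refl, auto)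
next
  case (2 v)
  then obtain x s \<gamma> y where "v = 2 / \<gamma>^2 * (f y - f x - restr blk S (y - x) \<bullet> restr blk S (df x))"
    and "x \<in> prodset blk n Mb" "\<forall>i\<in>S. restr blk {i} s \<in> Mb i" "0 < \<gamma>" "\<gamma> \<le> 1"
    and "y = x + \<gamma> *\<^sub>R (restr blk S s - restr blk S x)"
    by blast
  then show ?case by (simp only: curvature_quotient_le[OF assms(1,2,4,5,6)])
qed

lemma le_Sup_image_compact:
  fixes g :: "'a::topological_space \<Rightarrow> real"
  assumes "compact K" "continuous_on K g" "x \<in> K"
  shows "g x \<le> Sup (g ` K)"
  using assms
  by (intro cSup_upper imageI bounded_imp_bdd_above compact_imp_bounded compact_continuous_image)

lemma quad_form_le_Sup:
  fixes H :: "real^'m^'m"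
  assumes "compact K" "x \<in> K"
  shows "x \<bullet> (H *v x) \<le> Sup {x \<bullet> (H *v x) | x. x \<in> K}"
proof -
  have "x \<bullet> (H *v x) \<le> Sup ((\<lambda>x. x \<bullet> (H *v x)) ` K)"
    by (rule le_Sup_image_compact[where g="\<lambda>x. x \<bullet> (H *v x)", OF assms(1) _ assms(2)])
      (intro continuous_intros)
  moreover have "{x \<bullet> (H *v x) | x. x \<in> K} = (\<lambda>x. x \<bullet> (H *v x)) ` K" by auto
  ultimately show ?thesis by simp
qed

lemma bilinear_form_le_Sup:
  fixes H :: "real^'m^'m"
  assumes "compact K" "compact L" "x \<in> K" "y \<in> L"
  shows "x \<bullet> (H *v y) \<le> Sup {x \<bullet> (H *v y) | x y. x \<in> K \<and> y \<in> L}"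
proof -
  have "continuous_on (K \<times> L) (\<lambda>(a, b). a \<bullet> (H *v b))"
    unfolding case_prod_unfold
    by (intro continuous_intros bounded_linear.continuous_on[OF matrix_vector_mul_bounded_linear])
  then have "(\<lambda>(a, b). a \<bullet> (H *v b)) (x, y) \<le> Sup ((\<lambda>(a, b). a \<bullet> (H *v b)) ` (K \<times> L))"
    using assms by (intro le_Sup_image_compact compact_Times) auto
  moreover have "{x \<bullet> (H *v y) | x y. x \<in> K \<and> y \<in> L} = (\<lambda>(a, b). a \<bullet> (H *v b)) ` (K \<times> L)"
    by force
  ultimately show ?thesis by simp
qed

theorem theorem3:
  fixes f :: "real^'m \<Rightarrow> real" and df :: "real^'m \<Rightarrow> real^'m"
    and blk :: "'m \<Rightarrow> nat" and n :: nat and Mb :: "nat \<Rightarrow> (real^'m) set"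
    and H :: "real^'m^'m" and \<tau> :: nat
  assumes blocks: "range blk = {..<n}"
    and Mb_block: "\<And>i. i < n \<Longrightarrow> Mb i \<subseteq> {v. \<forall>j. blk j \<noteq> i \<longrightarrow> v $ j = 0}"
    and Mb_ne: "\<And>i. i < n \<Longrightarrow> Mb i \<noteq> {}"
    and Mb_compact: "\<And>i. i < n \<Longrightarrow> compact (Mb i)"
    and Mb_convex: "\<And>i. i < n \<Longrightarrow> convex (Mb i)"
    and grad: "\<And>x. (f has_derivative (\<lambda>h. df x \<bullet> h)) (at x)"
    and H_sym: "transpose H = H"
    and H_psd: "\<And>v. 0 \<le> v \<bullet> (H *v v)"
    and quad: "\<And>x y. x \<in> prodset blk n Mb \<Longrightarrow> y \<in> prodset blk n Mb \<Longrightarrow>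
        f y \<le> f x + (y - x) \<bullet> df x + 1/2 * ((y - x) \<bullet> (H *v (y - x)))"
    and tau: "1 \<le> \<tau>" "\<tau> \<le> n"
  shows "let Bb = (\<lambda>i. Sup {xi \<bullet> (H *v xi) | xi. xi \<in> Mb i});
             mu = (\<lambda>i j. Sup {xi \<bullet> (H *v xj) | xi xj. xi \<in> Mb i \<and> xj \<in> Mb j});
             B = (1 / real n) * (\<Sum>i<n. Bb i);
             \<mu> = (1 / (real n * (real n - 1))) * (\<Sum>(i,j) \<in> {(i,j). i < n \<and> j < n \<and> i \<noteq> j}. mu i j)
         in exp_curv f df blk n Mb \<tau> \<le> 4 * (real \<tau> * B + real \<tau> * (real \<tau> - 1) * \<mu>)"
proof -
  define Bb where "Bb i = Sup {xi \<bullet> (H *v xi) | xi. xi \<in> Mb i}" for i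
  define mu where "mu i j = Sup {xi \<bullet> (H *v xj) | xi xj. xi \<in> Mb i \<and> xj \<in> Mb j}" for i j
  define F where "F = {S. S \<subseteq> {..<n} \<and> card S = \<tau>}"
  have "set_curv f df blk n Mb S
      \<le> 4 * ((\<Sum>i\<in>S. Bb i) + (\<Sum>(i,j)\<in>{(i,j). i \<in> S \<and> j \<in> S \<and> i \<noteq> j}. mu i j))"
    if "S \<in> F" for S
  proof (rule set_curv_le[OF _ _ prodset_nonempty[OF Mb_block Mb_ne] H_psd quad])
    show "S \<subseteq> {..<n}" using that unfolding F_def by simp
    then show "convex (Mb i)" if "i \<in> S" for i using that Mb_convex by auto
    fix w assume "\<forall>i\<in>S. restr blk {i} w \<in> Mb i"
    with \<open>S \<subseteq> {..<n}\<close> show "restr blk S w \<bullet> (H *v restr blk S w)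
        \<le> (\<Sum>i\<in>S. Bb i) + (\<Sum>(i,j)\<in>{(i,j). i \<in> S \<and> j \<in> S \<and> i \<noteq> j}. mu i j)"
      unfolding Bb_def mu_def
      by (intro quad_form_restr_le finite_subset[OF _ finite_lessThan])
        (auto intro: quad_form_le_Sup bilinear_form_le_Sup Mb_compact)
  qed
  then have "exp_curv f df blk n Mb \<tau>
      \<le> 4 * ((\<Sum>S\<in>F. (\<Sum>i\<in>S. Bb i) + (\<Sum>(i,j)\<in>{(i,j). i \<in> S \<and> j \<in> S \<and> i \<noteq> j}. mu i j))
        / real (n choose \<tau>))"
    unfolding exp_curv_def F_def[symmetric] times_divide_eq_right sum_distrib_left
    by (intro divide_right_mono sum_mono) auto
  then show ?thesis
    unfolding Let_def Bb_def[symmetric] mu_def[symmetric] F_def average_over_subsets[OF tau] .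
qed

end
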